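(* Let $n\ge1$, let $\gamma,\beta$ be proper $3$-colorings of the $2\times n$ grid graph $M^*_{2,n}$, and for an even integer $H$ set $y_{i,j}(H)=H+h_{\gamma,v_{1,1}}(\beta,v_{i,j})$ ($i\in\{1,2\}$, $1\le j\le n$). If $H$ is an even integer minimizing $S(H)=\sum_{v\in V(M^*_{2,n})}|H+h_{\gamma,v_{1,1}}(\beta,v)|=\sum_{i=1}^2\sum_{j=1}^n|y_{i,j}(H)|$ over even integers, then at least one of the two median values of the multiset $Y=\{y_{i,j}(H)\}$ (its $n$-th and $(n+1)$-th smallest elements) equals $0$.
   Context: $M^*_{2,n}$ is the grid graph with vertices $v_{i,j}$ ($i\in\{1,2\}$, $1\le j\le n$), $v_{i,j}$ adjacent to $v_{i,j\pm1}$ and $v_{3-i,j}$. Colors lie in $\mathbb{Z}_3$. For a proper $3$-coloring $\gamma$ and an edge traversed from $a$ to $b$, its weight $w(\gamma,\overrightarrow{ab})\in\{1,-1\}$ is congruent to $\gamma(b)-\gamma(a)$ mod $3$; the weight $w(\gamma,P)$ of a directed path is the sum of its edge weights. For any proper $3$-coloring the weight of a directed path from $u$ to $v$ depends only on $u,v$. The relative height is $h_{\gamma,u}(\beta,v)=w(\beta,P_{u,v})-w(\gamma,P_{u,v})$ for any directed path $P_{u,v}$ from $u$ to $v$ (always an even integer). *)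

theory Defs
  imports Main "HOL-Library.Multiset" "HOL-Library.Numeral_Type"
begin

definition grid_V :: "nat \<Rightarrow> (nat \<times> nat) set" where
  "grid_V n = {1,2} \<times> {1..n}"

definition grid_adj :: "nat \<Rightarrow> nat \<times> nat \<Rightarrow> nat \<times> nat \<Rightarrow> bool" where
  "grid_adj n a b \<longleftrightarrow> a \<in> grid_V n \<and> b \<in> grid_V n \<and>
     ((fst a = fst b \<and> (snd b = snd a + 1 \<or> snd a = snd b + 1)) \<or>
      (snd a = snd b \<and> fst a + fst b = 3))"

definition proper3 :: "nat \<Rightarrow> (nat \<times> nat \<Rightarrow> 3) \<Rightarrow> bool" where
  "proper3 n \<gamma> \<longleftrightarrow> (\<forall>a b. grid_adj n a b \<longrightarrow> \<gamma> a \<noteq> \<gamma> b)"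

text \<open>Weight of the edge traversed from a to b: the element of {1,-1} congruent to
  gamma(b) - gamma(a) mod 3.\<close>
definition edge_w :: "(nat \<times> nat \<Rightarrow> 3) \<Rightarrow> nat \<times> nat \<Rightarrow> nat \<times> nat \<Rightarrow> int" where
  "edge_w \<gamma> a b = (if \<gamma> b - \<gamma> a = 1 then 1 else -1)"

fun path_w :: "(nat \<times> nat \<Rightarrow> 3) \<Rightarrow> (nat \<times> nat) list \<Rightarrow> int" where
  "path_w \<gamma> (a # b # rest) = edge_w \<gamma> a b + path_w \<gamma> (b # rest)"
| "path_w \<gamma> _ = 0"

definition is_dpath :: "nat \<Rightarrow> (nat \<times> nat) list \<Rightarrow> nat \<times> nat \<Rightarrow> nat \<times> nat \<Rightarrow> bool" where
  "is_dpath n P u v \<longleftrightarrow> P \<noteq> [] \<and> hd P = u \<and> last P = v \<and> distinct P \<and>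
     set P \<subseteq> grid_V n \<and> (\<forall>k. Suc k < length P \<longrightarrow> grid_adj n (P ! k) (P ! Suc k))"

text \<open>Relative height h_{gamma,u}(beta,v) = w(beta,P) - w(gamma,P) for a directed path P
  from u to v (independent of the choice of P).\<close>
definition rel_height ::
  "nat \<Rightarrow> (nat \<times> nat \<Rightarrow> 3) \<Rightarrow> nat \<times> nat \<Rightarrow> (nat \<times> nat \<Rightarrow> 3) \<Rightarrow> nat \<times> nat \<Rightarrow> int" where
  "rel_height n \<gamma> u \<beta> v =
     (SOME d. \<exists>P. is_dpath n P u v \<and> d = path_w \<beta> P - path_w \<gamma> P)"

end

theory Submission
  imports Defs
begin

text \<open>Around every square of the grid the edge weights of a proper 3-colouring add up to zero,
  so they are the increments of a height function, and a relative height is a difference of two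
  such functions: it is even and changes by at most 2 along an edge. If more than half of the
  values y lay strictly below 0 (above 0), then shifting H by 2 upwards (downwards) would
  decrease S; hence at a minimiser the two medians bracket 0. Were both nonzero, they would have
  opposite signs, and since y only passes through even values in steps of at most 2 along the
  connected grid, some y would equal 0 and sit strictly between two consecutive entries of the
  sorted list, which is absurd.\<close>

lemma num3_cases: "(x::3) = 0 \<or> x = 1 \<or> x = 2"
proof (induct x)
  case (of_int z)
  then have "z = 0 \<or> z = 1 \<or> z = 2" by auto
  then show ?case by auto
qed

lemma edge_w_swap: "\<gamma> a \<noteq> \<gamma> b \<Longrightarrow> edge_w \<gamma> b a = - edge_w \<gamma> a b"
  using num3_cases[of "\<gamma> a"] num3_cases[of "\<gamma> b"] by (auto simp: edge_w_def)

lemma edge_w_square: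
  assumes "\<gamma> a \<noteq> \<gamma> b" "\<gamma> a \<noteq> \<gamma> c" "\<gamma> b \<noteq> \<gamma> d" "\<gamma> c \<noteq> \<gamma> d"
  shows "edge_w \<gamma> a b + edge_w \<gamma> b d = edge_w \<gamma> a c + edge_w \<gamma> c d"
  using assms num3_cases[of "\<gamma> a"] num3_cases[of "\<gamma> b"] num3_cases[of "\<gamma> c"]
    num3_cases[of "\<gamma> d"]
  by (auto simp: edge_w_def)

lemma successively_iff_nth:
  "successively R xs \<longleftrightarrow> (\<forall>k. Suc k < length xs \<longrightarrow> R (xs ! k) (xs ! Suc k))"
  by (induction xs rule: induct_list012) (auto simp: less_Suc_eq_0_disj)

lemma path_w_telescope:
  assumes "successively (\<lambda>a b. edge_w \<gamma> a b = g b - g a) P" "P \<noteq> []"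
  shows "path_w \<gamma> P = g (last P) - g (hd P)"
  using assms by (induction P rule: induct_list012) auto

lemma is_dpath_successively: "is_dpath n P u v \<Longrightarrow> successively (grid_adj n) P"
  unfolding is_dpath_def successively_iff_nth by blast

lemma is_dpath_snoc:
  assumes "is_dpath n P u w" "grid_adj n w x" "x \<notin> set P"
  shows "is_dpath n (P @ [x]) u x"
proof -
  have P: "P \<noteq> []" "hd P = u" "last P = w" "distinct P" "set P \<subseteq> grid_V n"
    using assms(1) unfolding is_dpath_def by auto
  have "x \<in> grid_V n" using assms(2) unfolding grid_adj_def by simp
  moreover have "successively (grid_adj n) (P @ [x])"
    using is_dpath_successively[OF assms(1)] assms(2) P by (simp add: successively_append_iff)
  ultimately show ?thesis
    using assms(3) P unfolding is_dpath_def successively_iff_nth[symmetric] by simp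
qed

lemma is_dpath_row:
  "1 \<le> j \<Longrightarrow> j \<le> n \<Longrightarrow> is_dpath n (map (\<lambda>k. (1::nat, k)) [1..<Suc j]) (1,1) (1,j)"
proof (induction j rule: dec_induct)
  case base
  then show ?case by (simp add: is_dpath_def grid_V_def)
next
  case (step m)
  have "is_dpath n (map (\<lambda>k. (1::nat, k)) [1..<Suc m] @ [(1, Suc m)]) (1,1) (1, Suc m)"
    by (rule is_dpath_snoc) (use step in \<open>auto simp: grid_adj_def grid_V_def\<close>)
  then show ?case by simp
qed

lemma is_dpath_exists:
  assumes "v \<in> grid_V n"
  obtains P where "is_dpath n P (1,1) v"
proof -
  obtain i j where v: "v = (i,j)" "i \<in> {1,2}" "1 \<le> j" "j \<le> n"
    using assms unfolding grid_V_def by auto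
  let ?row = "map (\<lambda>k. (1::nat, k)) [1..<Suc j]"
  have row: "is_dpath n ?row (1,1) (1,j)" using is_dpath_row v by auto
  show thesis
  proof (cases "i = 1")
    case True
    then show thesis using that row v by simp
  next
    case False
    have "is_dpath n (?row @ [(2,j)]) (1,1) (2,j)"
      by (rule is_dpath_snoc[OF row]) (use v in \<open>auto simp: grid_adj_def grid_V_def\<close>)
    then show thesis using that v False by auto
  qed
qed

definition height :: "(nat \<times> nat \<Rightarrow> 3) \<Rightarrow> nat \<times> nat \<Rightarrow> int" where
  "height \<gamma> v = (\<Sum>k\<in>{1..<snd v}. edge_w \<gamma> (1,k) (1, Suc k))
     + (if fst v = 2 then edge_w \<gamma> (1, snd v) (2, snd v) else 0)"

lemma edge_w_row_step:
  assumes "proper3 n \<gamma>" "i \<in> {1,2}" "1 \<le> j" "Suc j \<le> n"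
  shows "edge_w \<gamma> (i,j) (i, Suc j) = height \<gamma> (i, Suc j) - height \<gamma> (i,j)"
proof -
  have "grid_adj n (1,j) (1, Suc j)" "grid_adj n (1,j) (2,j)"
    "grid_adj n (1, Suc j) (2, Suc j)" "grid_adj n (2,j) (2, Suc j)"
    using assms(3,4) by (auto simp: grid_adj_def grid_V_def)
  then have square: "edge_w \<gamma> (1,j) (1, Suc j) + edge_w \<gamma> (1, Suc j) (2, Suc j)
      = edge_w \<gamma> (1,j) (2,j) + edge_w \<gamma> (2,j) (2, Suc j)"
    using assms(1) unfolding proper3_def by (intro edge_w_square) auto
  have "(\<Sum>k\<in>{1..<Suc j}. edge_w \<gamma> (1,k) (1, Suc k))
      = (\<Sum>k\<in>{1..<j}. edge_w \<gamma> (1,k) (1, Suc k)) + edge_w \<gamma> (1,j) (1, Suc j)"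
    using assms(3) by simp
  then show ?thesis
    using assms(2) square by (auto simp: height_def)
qed

lemma edge_w_eq_height_diff:
  assumes "proper3 n \<gamma>" "grid_adj n a b"
  shows "edge_w \<gamma> a b = height \<gamma> b - height \<gamma> a"
proof -
  obtain i j i' j' where ab: "a = (i,j)" "b = (i',j')" by (cases a, cases b)
  have swap: "edge_w \<gamma> b a = - edge_w \<gamma> a b"
    using assms unfolding proper3_def by (blast intro: edge_w_swap)
  have V: "i \<in> {1,2}" "1 \<le> j" "i' \<in> {1,2}" "1 \<le> j'" "j \<le> n" "j' \<le> n"
    using assms(2) ab unfolding grid_adj_def grid_V_def by auto
  consider "i = i'" "j' = Suc j" | "i = i'" "j = Suc j'" | "j = j'" "i = 1" "i' = 2"
    | "j = j'" "i = 2" "i' = 1"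
    using assms(2) ab V unfolding grid_adj_def by auto
  then show ?thesis
  proof cases
    case 1
    then show ?thesis using edge_w_row_step[OF assms(1), of i j] V ab by simp
  next
    case 2
    then show ?thesis using edge_w_row_step[OF assms(1), of i j'] V ab swap by simp
  next
    case 3
    then show ?thesis using ab by (simp add: height_def)
  next
    case 4
    then show ?thesis using ab swap by (simp add: height_def)
  qed
qed

lemma path_w_eq_height_diff:
  assumes "proper3 n \<gamma>" "is_dpath n P u v"
  shows "path_w \<gamma> P = height \<gamma> v - height \<gamma> u"
proof -
  have "successively (\<lambda>a b. edge_w \<gamma> a b = height \<gamma> b - height \<gamma> a) P"
    using is_dpath_successively[OF assms(2)]
    by (rule successively_mono) (rule edge_w_eq_height_diff[OF assms(1)])
  then show ?thesis
    using path_w_telescope assms(2) unfolding is_dpath_def by blast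
qed

lemma rel_height_eq_height_diff:
  assumes "proper3 n \<gamma>" "proper3 n \<beta>" "v \<in> grid_V n"
  shows "rel_height n \<gamma> (1,1) \<beta> v = height \<beta> v - height \<gamma> v"
proof -
  have path_indep: "path_w \<beta> P - path_w \<gamma> P = height \<beta> v - height \<gamma> v"
    if "is_dpath n P (1,1) v" for P
    using path_w_eq_height_diff[OF assms(1) that] path_w_eq_height_diff[OF assms(2) that]
    by (simp add: height_def)
  obtain P where "is_dpath n P (1,1) v" using is_dpath_exists[OF assms(3)] .
  then have "\<exists>d P. is_dpath n P (1,1) v \<and> d = path_w \<beta> P - path_w \<gamma> P" by blast
  then have "\<exists>P. is_dpath n P (1,1) v
      \<and> rel_height n \<gamma> (1,1) \<beta> v = path_w \<beta> P - path_w \<gamma> P"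
    unfolding rel_height_def by (rule someI_ex)
  then show ?thesis using path_indep by auto
qed

lemma even_height_diff: "even (height \<beta> v - height \<gamma> v)"
proof -
  have edge: "even (edge_w \<beta> a b - edge_w \<gamma> a b)" for a b by (simp add: edge_w_def)
  have "height \<beta> v - height \<gamma> v
      = (\<Sum>k\<in>{1..<snd v}. edge_w \<beta> (1,k) (1, Suc k) - edge_w \<gamma> (1,k) (1, Suc k))
      + (if fst v = 2 then edge_w \<beta> (1, snd v) (2, snd v) - edge_w \<gamma> (1, snd v) (2, snd v)
         else 0)"
    by (simp add: height_def sum_subtractf)
  then show ?thesis using edge by (simp add: dvd_sum)
qed

lemma even_rel_height:
  assumes "proper3 n \<gamma>" "proper3 n \<beta>" "v \<in> grid_V n"
  shows "even (rel_height n \<gamma> (1,1) \<beta> v)"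
  using rel_height_eq_height_diff[OF assms] even_height_diff by simp

lemma rel_height_adj_le:
  assumes "proper3 n \<gamma>" "proper3 n \<beta>" "grid_adj n a b"
  shows "\<bar>rel_height n \<gamma> (1,1) \<beta> b - rel_height n \<gamma> (1,1) \<beta> a\<bar> \<le> 2"
proof -
  have "a \<in> grid_V n" "b \<in> grid_V n" using assms(3) unfolding grid_adj_def by simp_all
  then show ?thesis
    using rel_height_eq_height_diff[OF assms(1,2)]
      edge_w_eq_height_diff[OF assms(1,3)] edge_w_eq_height_diff[OF assms(2,3)]
    unfolding edge_w_def by (auto split: if_split_asm)
qed

lemma successively_sign_eq:
  fixes xs :: "int list"
  assumes "successively (\<lambda>a b. \<bar>b - a\<bar> \<le> 2) xs" "\<forall>x\<in>set xs. even x \<and> x \<noteq> 0" "xs \<noteq> []"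
  shows "last xs < 0 \<longleftrightarrow> hd xs < 0"
  using assms
proof (induction xs rule: induct_list012)
  case (3 x y zs)
  have "\<bar>y - x\<bar> \<le> 2" "even x" "even y" "x \<noteq> 0" "y \<noteq> 0"
    using "3.prems"(1,2) by simp_all
  then have "x < 0 \<longleftrightarrow> y < 0" by presburger
  then show ?case using "3.IH"(2) "3.prems" by simp
qed auto

lemma grid_discrete_ivt:
  fixes f :: "nat \<times> nat \<Rightarrow> int"
  assumes even: "\<forall>v\<in>grid_V n. even (f v)"
    and step: "\<And>a b. grid_adj n a b \<Longrightarrow> \<bar>f b - f a\<bar> \<le> 2"
    and "a \<in> f ` grid_V n" "b \<in> f ` grid_V n" "a < 0" "0 < b"
  shows "0 \<in> f ` grid_V n"
proof (rule ccontr)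
  assume zero_free: "0 \<notin> f ` grid_V n"
  have sign: "f v < 0 \<longleftrightarrow> f (1,1) < 0" if v: "v \<in> grid_V n" for v
  proof -
    obtain P where P: "is_dpath n P (1,1) v" using is_dpath_exists[OF v] .
    have "successively (\<lambda>a b. \<bar>b - a\<bar> \<le> 2) (map f P)"
      unfolding successively_map using is_dpath_successively[OF P]
      by (rule successively_mono) (rule step)
    moreover have "\<forall>x\<in>set (map f P). even x \<and> x \<noteq> 0"
      using P even zero_free unfolding is_dpath_def by force
    ultimately show ?thesis
      using successively_sign_eq[of "map f P"] P unfolding is_dpath_def
      by (simp add: last_map hd_map)
  qed
  obtain u w where "u \<in> grid_V n" "w \<in> grid_V n" "a = f u" "b = f w"
    using assms(3,4) by blast
  then show False using sign[of u] sign[of w] assms(5,6) by simp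
qed

lemma sum_list_abs_add_diff_le:
  fixes c :: "'a::linordered_idom"
  assumes "0 \<le> c"
  shows "(\<Sum>y\<leftarrow>ys. \<bar>y + c\<bar>) - (\<Sum>y\<leftarrow>ys. \<bar>y\<bar>)
    \<le> c * (of_nat (length ys) - 2 * of_nat (length (filter (\<lambda>y. y \<le> - c) ys)))"
  using assms by (induction ys) (auto simp: algebra_simps abs_if)

lemma length_filter_le_if_sorted_nth_le:
  assumes "sorted xs" "i < length xs" "xs ! i \<le> a"
  shows "Suc i \<le> length (filter (\<lambda>x. x \<le> a) xs)"
proof -
  have "{0..i} \<subseteq> {k. k < length xs \<and> xs ! k \<le> a}"
    using assms sorted_nth_mono[OF assms(1)] by fastforce
  then have "card {0..i} \<le> card {k. k < length xs \<and> xs ! k \<le> a}"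
    by (intro card_mono) auto
  then show ?thesis by (simp add: length_filter_conv_card)
qed

lemma length_filter_ge_if_sorted_nth_ge:
  assumes "sorted xs" "i < length xs" "a \<le> xs ! i"
  shows "length xs - i \<le> length (filter (\<lambda>x. a \<le> x) xs)"
proof -
  have "{i..<length xs} \<subseteq> {k. k < length xs \<and> a \<le> xs ! k}"
    using assms sorted_nth_mono[OF assms(1)] by fastforce
  then have "card {i..<length xs} \<le> card {k. k < length xs \<and> a \<le> xs ! k}"
    by (intro card_mono) auto
  then show ?thesis by (simp add: length_filter_conv_card)
qed

lemma medians_bracket_zero_if_shift_minimal:
  fixes ys :: "int list"
  assumes sorted: "sorted ys" and length: "length ys = 2 * n" and "n \<ge> 1"
    and even: "\<forall>y\<in>set ys. even y"
    and up: "(\<Sum>y\<leftarrow>ys. \<bar>y\<bar>) \<le> (\<Sum>y\<leftarrow>ys. \<bar>y + 2\<bar>)"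
    and down: "(\<Sum>y\<leftarrow>ys. \<bar>y\<bar>) \<le> (\<Sum>y\<leftarrow>ys. \<bar>y - 2\<bar>)"
  shows "ys ! (n - 1) \<le> 0 \<and> 0 \<le> ys ! n"
proof (intro conjI; rule ccontr)
  assume "\<not> ys ! (n - 1) \<le> 0"
  moreover have "even (ys ! (n - 1))" using even length \<open>n \<ge> 1\<close> by simp
  ultimately have "2 \<le> ys ! (n - 1)" by presburger
  then have "n + 1 \<le> length (filter (\<lambda>y. 2 \<le> y) ys)"
    using length_filter_ge_if_sorted_nth_ge[OF sorted, of "n - 1" 2] length \<open>n \<ge> 1\<close> by simp
  \<comment> \<open>negating the list turns the downward shift into an upward one\<close>
  moreover have "(\<Sum>y\<leftarrow>map uminus ys. \<bar>y + 2\<bar>) - (\<Sum>y\<leftarrow>map uminus ys. \<bar>y\<bar>)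
      \<le> 2 * (of_nat (length ys) - 2 * of_nat (length (filter (\<lambda>y. 2 \<le> y) ys)))"
    using sum_list_abs_add_diff_le[of 2 "map uminus ys"] by (simp add: filter_map o_def)
  ultimately have "(\<Sum>y\<leftarrow>ys. \<bar>y - 2\<bar>) < (\<Sum>y\<leftarrow>ys. \<bar>y\<bar>)"
    using length by (simp add: o_def abs_minus_commute)
  then show False using down by simp
next
  assume "\<not> 0 \<le> ys ! n"
  moreover have "even (ys ! n)" using even length \<open>n \<ge> 1\<close> by simp
  ultimately have "ys ! n \<le> -2" by presburger
  then have "n + 1 \<le> length (filter (\<lambda>y. y \<le> -2) ys)"
    using length_filter_le_if_sorted_nth_le[OF sorted, of n "-2"] length \<open>n \<ge> 1\<close> by simp
  then have "(\<Sum>y\<leftarrow>ys. \<bar>y + 2\<bar>) < (\<Sum>y\<leftarrow>ys. \<bar>y\<bar>)"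
    using sum_list_abs_add_diff_le[of 2 ys] length by simp
  then show False using up by simp
qed

lemma sorted_nth_eq_if_mem_between:
  assumes "sorted xs" "0 < i" "i < length xs" "xs ! (i - 1) \<le> a" "a \<le> xs ! i" "a \<in> set xs"
  shows "xs ! (i - 1) = a \<or> xs ! i = a"
proof (rule ccontr)
  assume "\<not> ?thesis"
  then have strict: "xs ! (i - 1) < a" "a < xs ! i" using assms(4,5) by auto
  obtain k where k: "k < length xs" "xs ! k = a" using assms(6) by (auto simp: in_set_conv_nth)
  show False
  proof (cases "k < i")
    case True
    then have "xs ! k \<le> xs ! (i - 1)" using sorted_nth_mono[OF assms(1)] assms(3) by simp
    then show False using strict k by simp
  next
    case False
    then show False using sorted_nth_mono[OF assms(1), of i k] strict k by simp
  qed
qed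

lemma sum_eq_sum_list_sorted_image_mset:
  "(\<Sum>v\<in>V. g (f v)) = (\<Sum>z\<leftarrow>sorted_list_of_multiset (image_mset f (mset_set V)). g z)"
proof -
  have "(\<Sum>v\<in>V. g (f v)) = (\<Sum>z\<in>#image_mset f (mset_set V). g z)"
    by (simp add: sum_unfold_sum_mset image_mset.compositionality o_def)
  then show ?thesis by (metis mset_map mset_sorted_list_of_multiset sum_mset_sum_list)
qed

theorem lemma5p7:
  fixes n :: nat and \<gamma> \<beta> :: "nat \<times> nat \<Rightarrow> 3" and H :: int
  assumes "n \<ge> 1"
    and "proper3 n \<gamma>" and "proper3 n \<beta>"
    and "even H"
    and "\<forall>H'::int. even H' \<longrightarrow>
           (\<Sum>v\<in>grid_V n. \<bar>H + rel_height n \<gamma> (1,1) \<beta> v\<bar>)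
             \<le> (\<Sum>v\<in>grid_V n. \<bar>H' + rel_height n \<gamma> (1,1) \<beta> v\<bar>)"
  shows "let ys = sorted_list_of_multiset
                    (image_mset (\<lambda>v. H + rel_height n \<gamma> (1,1) \<beta> v) (mset_set (grid_V n)))
         in ys ! (n - 1) = 0 \<or> ys ! n = 0"
proof -
  define y where "y = (\<lambda>v. H + rel_height n \<gamma> (1,1) \<beta> v)"
  define ys where "ys = sorted_list_of_multiset (image_mset y (mset_set (grid_V n)))"
  have set_ys: "set ys = y ` grid_V n" and sorted: "sorted ys"
    by (simp_all add: ys_def grid_V_def)
  have "length ys = card (grid_V n)"
    by (metis ys_def size_mset mset_sorted_list_of_multiset size_image_mset size_mset_set)
  then have length: "length ys = 2 * n" by (simp add: grid_V_def card_cartesian_product)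
  have y_even: "\<forall>v\<in>grid_V n. even (y v)"
    using even_rel_height[OF assms(2,3)] assms(4) by (simp add: y_def)
  have y_step: "\<bar>y b - y a\<bar> \<le> 2" if "grid_adj n a b" for a b
    using rel_height_adj_le[OF assms(2,3) that] by (simp add: y_def)
  have minimal: "(\<Sum>z\<leftarrow>ys. \<bar>z\<bar>) \<le> (\<Sum>z\<leftarrow>ys. \<bar>z + c\<bar>)" if "even c" for c
  proof -
    have "(\<Sum>v\<in>grid_V n. \<bar>y v\<bar>) \<le> (\<Sum>v\<in>grid_V n. \<bar>y v + c\<bar>)"
      using assms(5)[rule_format, of "H + c"] assms(4) that by (simp add: y_def ac_simps)
    then show ?thesis
      unfolding ys_def sum_eq_sum_list_sorted_image_mset[of abs y]
        sum_eq_sum_list_sorted_image_mset[of "\<lambda>z. \<bar>z + c\<bar>" y] .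
  qed
  have bracket: "ys ! (n - 1) \<le> 0" "0 \<le> ys ! n"
    using medians_bracket_zero_if_shift_minimal[OF sorted length assms(1)] y_even set_ys
      minimal[of 2] minimal[of "-2"] by auto
  have "0 \<in> set ys" if "ys ! (n - 1) < 0" "0 < ys ! n"
    using grid_discrete_ivt[OF y_even y_step, of "ys ! (n - 1)" "ys ! n"] that
      nth_mem[of "n - 1" ys] nth_mem[of n ys] length set_ys assms(1) by simp
  then have "ys ! (n - 1) = 0 \<or> ys ! n = 0"
    using sorted_nth_eq_if_mem_between[OF sorted, of n 0] bracket length assms(1)
    by fastforce
  then show ?thesis unfolding Let_def y_def[symmetric] ys_def[symmetric] .
qed

end
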